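(* Let $\mathcal{A}$ be a Banach algebra such that $\mathrm{rad}(\mathcal{A})=\mathrm{rann}(\mathcal{A})$ and $\mathcal{A}/\mathrm{rad}(\mathcal{A})$ is commutative, and suppose $\mathcal{A}$ has a right identity. Let $(\delta,d)$ be a generalized derivation of $\mathcal{A}$. Then the following are equivalent: (i) $\delta$ is skew centralizing; (ii) for every $k\in\mathbb{N}$, $\delta$ is $k$-skew centralizing; (iii) there exists $k\in\mathbb{N}$ such that $\delta$ is $k$-skew centralizing.
   Context: $\mathrm{rad}(\mathcal{A})$ is the Jacobson radical and $\mathrm{rann}(\mathcal{A})=\{c\in\mathcal{A}: ac=0\ \forall a\in\mathcal{A}\}$. A derivation is a linear map $d$ with $d(ab)=d(a)b+ad(b)$; a generalized derivation $(\delta,d)$ consists of a derivation $d$ and linear $\delta$ with $\delta(ab)=a\delta(b)+d(a)b$. $Z(\mathcal{A})$ is the center; $\langle a,b\rangle=ab+ba$. $T$ is $k$-skew centralizing if $\langle T(a),a^k\rangle\in Z(\mathcal{A})$ for all $a$; skew centralizing means $1$-skew centralizing. *)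

theory Defs
  imports "HOL-Analysis.Analysis"
begin

text \<open>Powers a^k for k >= 1 in a possibly non-unital algebra
  (the value at k = 0 is an irrelevant convention and is never used).\<close>
primrec apow :: "'a::ring \<Rightarrow> nat \<Rightarrow> 'a" where
  "apow a 0 = 0"
| "apow a (Suc n) = (if n = 0 then a else apow a n * a)"

text \<open>Left quasi-regularity: (1 - c)(1 - x) = 1 in the unitization.\<close>
definition left_quasi_regular :: "'a::ring \<Rightarrow> bool" where
  "left_quasi_regular x \<longleftrightarrow> (\<exists>c. c + x - c * x = 0)"

text \<open>Jacobson radical of a (possibly non-unital) ring, via Jacobson's
  quasi-regularity characterization.\<close>
definition jrad :: "'a::ring set" where
  "jrad = {a. \<forall>b. left_quasi_regular (b * a)}"

definition rann :: "'a::ring set" where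
  "rann = {c. \<forall>a. a * c = 0}"

definition center :: "'a::ring set" where
  "center = {z. \<forall>a. z * a = a * z}"

definition derivation :: "('a::real_algebra \<Rightarrow> 'a) \<Rightarrow> bool" where
  "derivation d \<longleftrightarrow> linear d \<and> (\<forall>a b. d (a * b) = d a * b + a * d b)"

definition generalized_derivation :: "('a::real_algebra \<Rightarrow> 'a) \<Rightarrow> ('a \<Rightarrow> 'a) \<Rightarrow> bool" where
  "generalized_derivation \<delta> d \<longleftrightarrow> derivation d \<and> linear \<delta> \<and>
     (\<forall>a b. \<delta> (a * b) = a * \<delta> b + d a * b)"

definition anticomm :: "'a::ring \<Rightarrow> 'a \<Rightarrow> 'a" where
  "anticomm a b = a * b + b * a"

definition k_skew_centralizing :: "nat \<Rightarrow> ('a::ring \<Rightarrow> 'a) \<Rightarrow> bool" where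
  "k_skew_centralizing k T \<longleftrightarrow> (\<forall>a. anticomm (T a) (apow a k) \<in> center)"

definition skew_centralizing :: "('a::ring \<Rightarrow> 'a) \<Rightarrow> bool" where
  "skew_centralizing T \<longleftrightarrow> k_skew_centralizing 1 T"

end

theory Submission
  imports Defs
begin

text \<open>Since commutators lie in the right annihilator N, the algebra satisfies
  x (y z) = x (z y); with a right identity e this makes the center exactly the
  set of z with e z = z and N z = 0, and \<open>\<langle>T a, a\<^sup>k\<^sup>+\<^sup>1\<rangle> = \<langle>T a, a\<rangle> a\<^sup>k\<close>, so
  skew centralizing implies k-skew centralizing for every map T. Conversely the
  elements e + n with n \<in> N are idempotent, so k-skew centralizing controls
  \<open>\<langle>\<delta> u, u\<rangle>\<close> at these u, which forces d e = 0, d N = 0 and N \<delta>(e) = 0; these three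
  conditions already make \<open>\<langle>\<delta> a, a\<rangle> = d(a\<^sup>2) + 2 a\<^sup>2 \<delta>(e)\<close> central.\<close>

lemma apow_Suc_left:
  assumes "m \<ge> 1"
  shows "apow (a::'a::ring) (Suc m) = a * apow a m"
  using assms
proof (induction m)
  case (Suc m)
  then show ?case
    by (cases "m = 0") (simp_all add: mult.assoc)
qed simp

lemma apow_idem:
  assumes "(u::'a::ring) * u = u" and "k \<ge> 1"
  shows "apow u k = u"
  using assms(2)
proof (induction k)
  case (Suc k)
  then show ?case
    using assms(1) by (cases "k = 0") simp_all
qed simp

lemma center_diff:
  assumes "z1 \<in> center" and "z2 \<in> center"
  shows "z1 - z2 \<in> (center :: 'a::ring set)"
  using assms by (simp add: center_def left_diff_distrib right_diff_distrib)

locale commutator_rann_ring =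
  fixes e :: "'a::ring"
  assumes right_unit: "a * e = a"
    and commutator_in_rann: "a * b - b * a \<in> rann"
begin

lemma mult_swap_right: "x * (y * z) = x * (z * (y::'a))"
  using commutator_in_rann[of y z] by (simp add: rann_def right_diff_distrib)

lemma mult_left_unit_eq: "a * (e * x) = a * x"
  by (metis mult.assoc right_unit)

lemma diff_left_unit_in_rann: "x - e * x \<in> rann"
  by (simp add: rann_def right_diff_distrib mult_left_unit_eq)

lemma left_unit_absorbs_mult:
  assumes "\<And>n. n \<in> rann \<Longrightarrow> n * x = 0"
  shows "e * (a * x) = a * x"
proof -
  have "a * x = e * a * x + (a - e * a) * x"
    by (simp add: algebra_simps)
  then show ?thesis
    using assms[OF diff_left_unit_in_rann] by (simp add: mult.assoc)
qed

lemma center_iff: "z \<in> center \<longleftrightarrow> e * z = z \<and> (\<forall>n\<in>rann. n * z = 0)"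
proof
  assume "z \<in> center"
  then have "a * z = z * a" for a
    by (simp add: center_def)
  then show "e * z = z \<and> (\<forall>n\<in>rann. n * z = 0)"
    by (simp add: right_unit rann_def)
next
  assume z: "e * z = z \<and> (\<forall>n\<in>rann. n * z = 0)"
  have "a * z = z * a" for a
  proof -
    have "a * z = e * (a * z)"
      using z left_unit_absorbs_mult by simp
    also have "\<dots> = e * (z * a)"
      by (rule mult_swap_right)
    finally show ?thesis
      using z by (simp add: mult.assoc[symmetric])
  qed
  then show "z \<in> center"
    by (simp add: center_def)
qed

lemma center_mult_right:
  assumes "z \<in> center"
  shows "z * (y::'a) \<in> center"
  using assms by (simp add: center_iff mult.assoc[symmetric] rann_def)

lemma anticomm_apow_Suc:
  assumes "m \<ge> 1"
  shows "anticomm t (apow (a::'a) (Suc m)) = anticomm t a * apow a m"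
proof -
  have "(a * apow a m) * t = a * (t * apow a m)"
    by (metis mult.assoc mult_swap_right)
  then show ?thesis
    unfolding anticomm_def apow_Suc_left[OF assms] by (simp add: distrib_right mult.assoc)
qed

lemma skew_centralizing_imp_k_skew_centralizing:
  assumes "skew_centralizing (T :: 'a \<Rightarrow> 'a)" and "k \<ge> 1"
  shows "k_skew_centralizing k T"
proof -
  have central: "anticomm (T a) a \<in> center" for a
    using assms(1) by (simp add: skew_centralizing_def k_skew_centralizing_def)
  have "anticomm (T a) (apow a k) \<in> center" for a
  proof (cases "k = 1")
    case False
    then obtain m where "k = Suc m" "m \<ge> 1"
      using assms(2) by (cases k) auto
    then show ?thesis
      using anticomm_apow_Suc central center_mult_right by simp
  qed (simp add: central)
  then show ?thesis
    by (simp add: k_skew_centralizing_def)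
qed

lemma idempotent_right_unit_plus_rann:
  assumes "n \<in> rann"
  shows "(e + n) * (e + n) = e + n"
  using assms by (simp add: rann_def algebra_simps right_unit)

end

locale commutator_rann_generalized_derivation = commutator_rann_ring e
  for e :: "'a::real_algebra" +
  fixes \<delta> d :: "'a \<Rightarrow> 'a"
  assumes generalized_derivation: "generalized_derivation \<delta> d"
begin

lemma linear_d: "linear d"
  and d_mult: "d (a * b) = d a * b + a * d b"
  and delta_mult: "\<delta> (a * b) = a * \<delta> b + d a * b"
  using generalized_derivation by (auto simp: generalized_derivation_def derivation_def)

lemma delta_eq: "\<delta> x = x * \<delta> e + d x"
  using delta_mult[of x e] by (simp add: right_unit)

lemma skew_centralizing_if_kills_rann:
  assumes de: "d e = 0"
    and dn: "\<And>n. n \<in> rann \<Longrightarrow> d n = 0"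
    and nw: "\<And>n. n \<in> rann \<Longrightarrow> n * \<delta> e = 0"
  shows "skew_centralizing \<delta>"
proof -
  have "anticomm (\<delta> a) a \<in> center" for a
  proof -
    define w b where "w = \<delta> e" and "b = a * a"
    have "a * w * a = a * a * w"
      by (simp add: mult.assoc mult_swap_right)
    then have anticomm_eq: "anticomm (\<delta> a) a = d b + b * w + b * w"
      unfolding anticomm_def delta_eq[of a] d_mult b_def w_def by (simp add: algebra_simps)
    have "d b = d (e * b)"
      using dn[OF diff_left_unit_in_rann[of b]] linear_diff[OF linear_d, of b "e * b"] by simp
    then have e_db: "e * d b = d b"
      using d_mult[of e b] de by simp
    have e_bw: "e * (b * w) = b * w"
      using nw left_unit_absorbs_mult by (simp add: w_def)
    have "n * d b = 0" and "n * (b * w) = 0" if n: "n \<in> rann" for n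
    proof -
      have "n * b \<in> rann"
        using n by (simp add: rann_def mult.assoc[symmetric])
      then show "n * d b = 0"
        using d_mult[of n b] dn[OF n] dn by simp
      show "n * (b * w) = 0"
        using mult_swap_right[of n b w] nw[OF n] by (simp add: w_def mult.assoc[symmetric])
    qed
    then show ?thesis
      unfolding anticomm_eq center_iff using e_db e_bw by (simp add: algebra_simps)
  qed
  then show ?thesis
    by (simp add: skew_centralizing_def k_skew_centralizing_def)
qed

lemma anticomm_right_unit_central_imp:
  assumes central: "anticomm (\<delta> e) e \<in> center"
  shows "e * \<delta> e = \<delta> e" and "d e = 0" and "n \<in> rann \<Longrightarrow> n * \<delta> e = 0"
proof -
  define w where "w = \<delta> e"
  have w_central: "w + e * w \<in> center"
    using central right_unit[of "\<delta> e"] by (simp add: anticomm_def w_def)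
  then show ew: "e * \<delta> e = \<delta> e"
    using right_unit[of e] by (simp add: center_iff distrib_left mult.assoc[symmetric] w_def)
  show "d e = 0"
    using delta_mult[of e e] right_unit[of e] right_unit[of "d e"] ew by simp
  assume n: "n \<in> rann"
  have "n * (w + e * w) = 0"
    using w_central n by (simp add: center_iff)
  then have "2 *\<^sub>R (n * w) = 0"
    by (simp add: distrib_left mult_left_unit_eq scaleR_2)
  then show "n * \<delta> e = 0"
    by (simp add: w_def)
qed

lemma left_unit_mult_d_rann:
  assumes "d e = 0" and "n \<in> rann"
  shows "e * d n = 0"
proof -
  have "d (e * n) = 0"
    using assms(2) linear_0[OF linear_d] by (simp add: rann_def)
  then show ?thesis
    using d_mult[of e n] assms(1) by simp
qed

lemma anticomm_right_unit_plus_rann: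
  assumes ew: "e * \<delta> e = \<delta> e" and de: "d e = 0"
    and n: "n \<in> rann" and nw: "n * \<delta> e = 0"
  shows "anticomm (\<delta> (e + n)) (e + n) = \<delta> e + \<delta> e + d n + n * d n"
proof -
  have "\<delta> (e + n) = \<delta> e + d n"
    using delta_eq[of "e + n"] ew de nw by (simp add: linear_add[OF linear_d] distrib_right)
  then show ?thesis
    using n ew nw left_unit_mult_d_rann[OF de n] right_unit[of "\<delta> e"] right_unit[of "d n"]
    by (simp add: anticomm_def rann_def distrib_left distrib_right)
qed

lemma kills_rann_if_idempotents_central:
  assumes central: "\<And>n. n \<in> rann \<Longrightarrow> anticomm (\<delta> (e + n)) (e + n) \<in> center"
  shows "d e = 0" and "\<And>n. n \<in> rann \<Longrightarrow> d n = 0" and "\<And>n. n \<in> rann \<Longrightarrow> n * \<delta> e = 0"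
proof -
  have "0 \<in> (rann :: 'a set)"
    by (simp add: rann_def)
  then have "anticomm (\<delta> e) e \<in> center"
    using central by fastforce
  note ew = anticomm_right_unit_central_imp(1)[OF this]
    and de = anticomm_right_unit_central_imp(2)[OF this]
    and nw = anticomm_right_unit_central_imp(3)[OF this]
  show "d e = 0" "\<And>n. n \<in> rann \<Longrightarrow> n * \<delta> e = 0"
    by (fact de, fact nw)
  show "d n = 0" if n: "n \<in> rann" for n
  proof -
    have minus_n: "- n \<in> rann"
      using n by (simp add: rann_def)
    have "anticomm (\<delta> (e + n)) (e + n) - anticomm (\<delta> (e + - n)) (e + - n) = 2 *\<^sub>R d n"
      \<comment> \<open>the uncontrolled terms \<open>n d(n)\<close> cancel\<close>
      using anticomm_right_unit_plus_rann[OF ew de n nw[OF n]]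
        anticomm_right_unit_plus_rann[OF ew de minus_n nw[OF minus_n]]
      by (simp add: linear_neg[OF linear_d] scaleR_2)
    then have "2 *\<^sub>R d n \<in> center"
      using center_diff central n minus_n by metis
    moreover have "e * (2 *\<^sub>R d n) = 0"
      using left_unit_mult_d_rann[OF de n] by simp
    ultimately show ?thesis
      by (simp add: center_iff)
  qed
qed

lemma k_skew_centralizing_imp_skew_centralizing:
  assumes "k \<ge> 1" and "k_skew_centralizing k \<delta>"
  shows "skew_centralizing \<delta>"
proof -
  have central: "anticomm (\<delta> (e + n)) (e + n) \<in> center" if "n \<in> rann" for n
  proof -
    have "anticomm (\<delta> (e + n)) (apow (e + n) k) \<in> center"
      using assms(2) by (simp add: k_skew_centralizing_def)
    then show ?thesis
      unfolding apow_idem[OF idempotent_right_unit_plus_rann[OF that] assms(1)] .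
  qed
  show ?thesis
    using kills_rann_if_idempotents_central[OF central] by (rule skew_centralizing_if_kills_rann)
qed

end

theorem corollary5p3:
  fixes \<delta> d :: "'a::{real_normed_algebra, banach} \<Rightarrow> 'a"
  assumes "(jrad :: 'a set) = rann"
    and "\<forall>a b :: 'a. a * b - b * a \<in> jrad"
    and "\<exists>e :: 'a. \<forall>a. a * e = a"
    and "generalized_derivation \<delta> d"
  shows "(skew_centralizing \<delta> \<longleftrightarrow> (\<forall>k\<ge>1. k_skew_centralizing k \<delta>))
       \<and> ((\<forall>k\<ge>1. k_skew_centralizing k \<delta>) \<longleftrightarrow> (\<exists>k\<ge>1. k_skew_centralizing k \<delta>))"
proof -
  obtain e :: 'a where "\<And>a. a * e = a"
    using assms(3) by blast
  then interpret commutator_rann_generalized_derivation e \<delta> d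
    using assms(1,2,4) by unfold_locales auto
  have "skew_centralizing \<delta> \<Longrightarrow> \<forall>k\<ge>1. k_skew_centralizing k \<delta>"
    by (simp add: skew_centralizing_imp_k_skew_centralizing)
  moreover have "\<exists>k\<ge>1. k_skew_centralizing k \<delta> \<Longrightarrow> skew_centralizing \<delta>"
    using k_skew_centralizing_imp_skew_centralizing by blast
  ultimately show ?thesis
    by auto
qed

end
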